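(* Let $\Omega$ be a simply connected domain containing $\mathbb{D}$, let $\lambda=\lambda(\Omega)$ be as defined in the context (assumed finite and positive), and let $m\ge1$ and $$P(w)=\sum_{j=1}^m k_jw^j,\qquad k_j=\left(\frac{1+\lambda}{1+2\lambda}\right)^{2j}.$$ If $f\in\mathcal{B}(\Omega)$ with $f(z)=\sum_{n=0}^\infty a_nz^n$ for $z\in\mathbb{D}$, then $$\sum_{n=0}^\infty|a_n|r^n+P\!\left(\frac{S_r}{\pi}\right)\le 1\quad\text{for } 0<r\le\frac{1}{1+2\lambda},$$ where $S_r$ is the area of the image of the disk $\{|z|<r\}$ under $f$. Equality at $r=1/(1+2\lambda)$ can only occur when $f$ is a unimodular constant.
   Context: $\mathbb{D}$ is the open unit disk; $\mathcal{B}(\Omega)$ is the class of analytic $f$ on $\Omega$ with $|f|<1$ on $\Omega$. $\lambda(\Omega)=\sup\{|a_n|/(1-|a_0|^2): n\ge1,\ f\in\mathcal{B}(\Omega)\text{ nonconstant},\ f(z)=\sum a_nz^n \text{ on }\mathbb{D}\}$, so that $|a_n|\le\lambda(1-|a_0|^2)$ for all $n\ge1$ and all $f\in\mathcal{B}(\Omega)$. Area is counted with multiplicity: $S_r=\iint_{|z|<r}|f'(z)|^2\,dx\,dy$. *)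

theory Defs
  imports "HOL-Complex_Analysis.Complex_Analysis"
begin

definition bounded_class :: "complex set \<Rightarrow> (complex \<Rightarrow> complex) set" where
  "bounded_class \<Omega> = {f. f holomorphic_on \<Omega> \<and> (\<forall>z\<in>\<Omega>. norm (f z) < 1)}"

definition taylor_coeff :: "(complex \<Rightarrow> complex) \<Rightarrow> nat \<Rightarrow> complex" where
  "taylor_coeff f n = (deriv ^^ n) f 0 / of_nat (fact n)"

definition bohr_lambda :: "complex set \<Rightarrow> real" where
  "bohr_lambda \<Omega> = Sup {norm (taylor_coeff f n) / (1 - (norm (taylor_coeff f 0))\<^sup>2) | f n.
       n \<ge> 1 \<and> f \<in> bounded_class \<Omega> \<and> \<not> (\<exists>c. \<forall>z\<in>\<Omega>. f z = c)}"

text \<open>S_r: area (with multiplicity) of the image of the disk |z| < r.\<close>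
definition area_image :: "(complex \<Rightarrow> complex) \<Rightarrow> real \<Rightarrow> real" where
  "area_image f r = integral (ball 0 r) (\<lambda>z. (norm (deriv f z))\<^sup>2)"

end

theory Submission
  imports Defs
begin

text \<open>
  With A = |a_0| and L = \<lambda> (1 - A^2), the definition of \<lambda> gives |a_n| \<le> L for n \<ge> 1.
  Hence \<Sum> |a_n| r^n \<le> A + L r / (1 - r) and S_r / \<pi> \<le> \<Sum> n |a_n|^2 r^(2n) \<le> L^2 r^2 / (1 - r^2)^2.
  At r = 1 / (1 + 2 \<lambda>) the first bound equals A + (1 - A^2) / 2, and the weight k_1 turns the
  second into u = (1 - A^2)^2 / 16, so the left-hand side is at most
  A + (1 - A^2) / 2 + u / (1 - u) < 1. The inequality is thus strict for every f, which settles
  the equality case; of the hypotheses on \<Omega> only the inclusion of the unit disc and the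
  finiteness of \<lambda> are needed.

  The area bound avoids polar coordinates: averaging |p|^2 over the rotations by roots of unity
  removes the cross terms of a polynomial p, and the integral of |z|^n over the disc of radius
  \<rho> is at most 2 \<pi> \<rho>^(n + 2) / (n + 2) by the scaling law of that integral.
\<close>

no_notation fps_nth (infixl "$" 75)
hide_const (open) Polynomial.content

text \<open>The change of variables theorems of HOL-Analysis are stated on \<open>real^n\<close>; this
  isometry transports them to the complex plane.\<close>

definition complex_of_vec2 :: "real^2 \<Rightarrow> complex" where
  "complex_of_vec2 v = Complex (v$1) (v$2)"

definition vec2_of_complex :: "complex \<Rightarrow> real^2" where
  "vec2_of_complex z = vector [Re z, Im z]"

lemma vec2_of_complex_of_vec2 [simp]: "vec2_of_complex (complex_of_vec2 v) = v"
  by (simp add: complex_of_vec2_def vec2_of_complex_def vec_eq_iff forall_2)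

lemma complex_of_vec2_of_complex [simp]: "complex_of_vec2 (vec2_of_complex z) = z"
  by (simp add: complex_of_vec2_def vec2_of_complex_def complex_eq_iff)

lemma linear_complex_of_vec2: "linear complex_of_vec2"
  by (rule linearI) (simp_all add: complex_of_vec2_def complex_eq_iff)

lemma linear_vec2_of_complex: "linear vec2_of_complex"
  by (rule linearI) (simp_all add: vec2_of_complex_def vec_eq_iff forall_2)

lemma mem_cbox_complex:
  "(z::complex) \<in> cbox a b \<longleftrightarrow> Re a \<le> Re z \<and> Re z \<le> Re b \<and> Im a \<le> Im z \<and> Im z \<le> Im b"
  by (auto simp: mem_box Basis_complex_def)

lemma complex_of_vec2_cbox:
  "complex_of_vec2 ` cbox u v = cbox (complex_of_vec2 u) (complex_of_vec2 v)"
proof -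
  have "complex_of_vec2 ` cbox u v = {z. vec2_of_complex z \<in> cbox u v}"
    by (auto simp: image_iff) (metis complex_of_vec2_of_complex)
  then show ?thesis
    by (auto simp: mem_cbox_complex mem_box_cart forall_2 vec2_of_complex_def complex_of_vec2_def)
qed

lemma vec2_of_complex_cbox:
  "vec2_of_complex ` cbox u v = cbox (vec2_of_complex u) (vec2_of_complex v)"
proof -
  have "vec2_of_complex ` cbox u v = {z. complex_of_vec2 z \<in> cbox u v}"
    by (auto simp: image_iff) (metis vec2_of_complex_of_vec2)
  then show ?thesis
    by (auto simp: mem_cbox_complex mem_box_cart forall_2 vec2_of_complex_def complex_of_vec2_def)
qed

lemma content_complex_of_vec2_cbox:
  "content (complex_of_vec2 ` cbox u v) = content (cbox u v)"
  unfolding complex_of_vec2_cbox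
  by (simp add: content_cbox_cases Basis_complex_def complex_of_vec2_def UNIV_2 forall_2
      Basis_vec_def inner_axis axis_eq_axis mult.commute)

lemma content_vec2_of_complex_cbox:
  "content (vec2_of_complex ` cbox u v) = content (cbox u v)"
  unfolding vec2_of_complex_cbox
  by (simp add: content_cbox_cases Basis_complex_def vec2_of_complex_def UNIV_2 forall_2
      Basis_vec_def inner_axis axis_eq_axis mult.commute)

lemma has_integral_compose_volume_preserving_linear:
  fixes F :: "'b::euclidean_space \<Rightarrow> real" and g :: "'a::euclidean_space \<Rightarrow> 'b"
  assumes "linear g" and hg: "\<And>x. h (g x) = x" and gh: "\<And>y. g (h y) = y"
    and g_cbox: "\<And>u v. g ` cbox u v = cbox (g u) (g v)"
    and h_cbox: "\<And>u v. h ` cbox u v = cbox (h u) (h v)"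
    and content_g: "\<And>u v. content (g ` cbox u v) = content (cbox u v)"
    and F: "(F has_integral b) S" and "bounded S"
  shows "((\<lambda>x. F (g x)) has_integral b) (h ` S)"
proof -
  obtain c where S: "S \<subseteq> cbox (-c) c"
    using bounded_subset_cbox_symmetric \<open>bounded S\<close> by blast
  define F0 where "F0 y = (if y \<in> S then F y else 0)" for y
  have "(F0 has_integral b) (cbox (-c) c)"
    unfolding F0_def by (rule has_integral_restrict[OF S, THEN iffD2, OF F])
  then have "((\<lambda>x. F0 (g x)) has_integral (1/1) *\<^sub>R b) (h ` cbox (-c) c)"
    by (rule has_integral_twiddle[where r=1, rotated -1])
      (use hg gh g_cbox h_cbox content_g linear_continuous_at
        \<open>linear g\<close>[unfolded linear_conv_bounded_linear] in auto)
  moreover have "(\<lambda>x. F0 (g x)) = (\<lambda>x. if x \<in> h ` S then F (g x) else 0)"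
    using hg gh by (auto simp: F0_def fun_eq_iff image_iff)
  moreover have "h ` S \<subseteq> h ` cbox (-c) c"
    using S by blast
  ultimately show ?thesis
    by simp
qed

lemma has_integral_vec2_of_complex_image:
  fixes F :: "complex \<Rightarrow> real"
  assumes "(F has_integral b) S" and "bounded S"
  shows "((\<lambda>v. F (complex_of_vec2 v)) has_integral b) (vec2_of_complex ` S)"
  by (rule has_integral_compose_volume_preserving_linear[OF linear_complex_of_vec2 _ _
        complex_of_vec2_cbox vec2_of_complex_cbox content_complex_of_vec2_cbox assms]) simp_all

lemma has_integral_complex_of_vec2_image:
  fixes G :: "real^2 \<Rightarrow> real"
  assumes "(G has_integral b) T" and "bounded T"
  shows "((\<lambda>z. G (vec2_of_complex z)) has_integral b) (complex_of_vec2 ` T)"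
  by (rule has_integral_compose_volume_preserving_linear[OF linear_vec2_of_complex _ _
        vec2_of_complex_cbox complex_of_vec2_cbox content_vec2_of_complex_cbox assms]) simp_all

lemma has_integral_rotate_ball:
  fixes F :: "complex \<Rightarrow> real"
  assumes F: "(F has_integral b) (ball 0 r)" and nonneg: "\<And>z. z \<in> ball 0 r \<Longrightarrow> 0 \<le> F z"
    and \<omega>: "norm \<omega> = 1"
  shows "((\<lambda>z. F (\<omega> * z)) has_integral b) (ball 0 r)"
proof -
  define S where "S = vec2_of_complex ` ball 0 r"
  have "bounded S"
    unfolding S_def using linear_vec2_of_complex[unfolded linear_conv_bounded_linear]
    by (rule bounded_linear_image[OF bounded_ball])
  have memS: "v \<in> S \<longleftrightarrow> norm (complex_of_vec2 v) < r" for v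
    unfolding S_def by (auto simp: image_iff intro!: bexI[where x="complex_of_vec2 v"])
  define R where "R v = vec2_of_complex (\<omega> * complex_of_vec2 v)" for v
  define R' where "R' v = vec2_of_complex (cnj \<omega> * complex_of_vec2 v)" for v
  have \<omega>_cnj: "cnj \<omega> * \<omega> = 1" "\<omega> * cnj \<omega> = 1"
    using \<omega> complex_norm_square[of \<omega>] by (simp_all add: mult.commute)
  have lin: "linear (\<lambda>v. vec2_of_complex (c * complex_of_vec2 v))" for c
    using linear_compose[OF linear_complex_of_vec2 linear_compose[OF
          bounded_linear.linear[OF bounded_linear_mult_right[of c]] linear_vec2_of_complex]]
    by (simp add: o_def)
  have "linear R" "linear R'"
    unfolding R_def R'_def by (rule lin)+
  have det_R: "det (matrix R) = 1"
  proof -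
    have "det (matrix R) = Re \<omega> * Re \<omega> - (- Im \<omega>) * Im \<omega>"
      by (simp add: det_2 matrix_def R_def vec2_of_complex_def complex_of_vec2_def axis_def)
    also have "\<dots> = (norm \<omega>)\<^sup>2"
      using cmod_power2[of \<omega>] by (simp add: power2_eq_square)
    finally show ?thesis
      using \<omega> by simp
  qed
  have "((\<lambda>v. \<bar>det (matrix R)\<bar> * F (complex_of_vec2 (R v))) has_integral b) S \<longleftrightarrow>
        ((\<lambda>v. F (complex_of_vec2 v)) has_integral b) S"
  proof (rule cov_invertible_nonneg_eq[where h=R' and g'="\<lambda>_. R" and h'="\<lambda>_. R'"])
    show "(R has_derivative R) (at v within S)" for v
      using \<open>linear R\<close> by (rule linear_imp_has_derivative)
    show "(R' has_derivative R') (at v within S)" for v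
      using \<open>linear R'\<close> by (rule linear_imp_has_derivative)
    show "0 \<le> F (complex_of_vec2 v)" if "v \<in> S" for v
      using nonneg memS that by simp
    show "R v \<in> S \<and> R' (R v) = v" "R' v \<in> S \<and> R (R' v) = v" if "v \<in> S" for v
      using that \<omega> \<omega>_cnj
      by (simp_all add: memS R_def R'_def norm_mult mult.assoc[symmetric])
    show "R' \<circ> R = id"
      using \<omega>_cnj by (simp add: fun_eq_iff R_def R'_def mult.assoc[symmetric])
  qed
  with has_integral_vec2_of_complex_image[OF F bounded_ball]
  have "((\<lambda>v. F (\<omega> * complex_of_vec2 v)) has_integral b) S"
    by (simp add: det_R R_def S_def)
  from has_integral_complex_of_vec2_image[OF this \<open>bounded S\<close>] show ?thesis
    by (simp add: S_def image_image)
qed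

lemma integrable_on_ball_if_continuous_on_cball:
  fixes g :: "'a::euclidean_space \<Rightarrow> real"
  assumes "continuous_on (cball c \<rho>) g"
  shows "g integrable_on ball c \<rho>"
proof -
  obtain B where B: "\<And>x. x \<in> cball c \<rho> \<Longrightarrow> norm (g x) \<le> B"
    using compact_imp_bounded[OF compact_continuous_image[OF assms compact_cball]]
    unfolding bounded_iff by blast
  show ?thesis
  proof (rule measurable_bounded_by_integrable_imp_integrable[where g="\<lambda>_. B"])
    show "g \<in> borel_measurable (lebesgue_on (ball c \<rho>))"
      by (rule continuous_imp_measurable_on_sets_lebesgue[OF continuous_on_subset[OF assms]])
        (auto simp: fmeasurableD[OF lmeasurable_ball])
    show "(\<lambda>_. B) integrable_on ball c \<rho>"
      by (rule integrable_on_const[OF lmeasurable_ball])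
    show "norm (g x) \<le> B" if "x \<in> ball c \<rho>" for x
      using B that by auto
  qed (simp add: fmeasurableD[OF lmeasurable_ball])
qed

lemma has_integral_rescale_ball:
  fixes G :: "'a::euclidean_space \<Rightarrow> real"
  assumes G: "(G has_integral b) (ball 0 \<rho>)" and "\<rho> > 0"
  shows "((\<lambda>w. G (\<rho> *\<^sub>R w)) has_integral b / \<rho> ^ DIM('a)) (ball 0 1)"
proof -
  obtain c :: 'a where c: "ball 0 \<rho> \<subseteq> cbox (-c) c"
    using bounded_subset_cbox_symmetric bounded_ball by blast
  define T where "T = (\<lambda>x. (1 / \<rho>) *\<^sub>R x) ` cbox (-c) c"
  have mem_ball: "\<rho> *\<^sub>R x \<in> ball 0 \<rho> \<longleftrightarrow> x \<in> ball 0 1" for x :: 'a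
    using \<open>\<rho> > 0\<close> by simp
  have "((\<lambda>x. if x \<in> ball 0 \<rho> then G x else 0) has_integral b) (cbox (-c) c)"
    by (rule has_integral_restrict[OF c, THEN iffD2, OF G])
  from has_integral_affinity[OF this, of \<rho> 0, unfolded add_0_right] \<open>\<rho> > 0\<close>
  have "((\<lambda>x. if x \<in> ball 0 1 then G (\<rho> *\<^sub>R x) else 0) has_integral b / \<rho> ^ DIM('a)) T"
    unfolding mem_ball T_def by (simp add: divide_inverse_commute)
  moreover have "ball 0 1 \<subseteq> T"
  proof
    fix x :: 'a
    assume "x \<in> ball 0 1"
    then have "\<rho> *\<^sub>R x \<in> cbox (-c) c"
      using c mem_ball by blast
    moreover have "x = (1 / \<rho>) *\<^sub>R (\<rho> *\<^sub>R x)"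
      using \<open>\<rho> > 0\<close> by simp
    ultimately show "x \<in> T"
      unfolding T_def by blast
  qed
  ultimately show ?thesis
    using has_integral_restrict by blast
qed

lemma integral_ball_diff_le:
  fixes F :: "complex \<Rightarrow> real"
  assumes "F integrable_on ball 0 t" and "F integrable_on ball 0 s"
    and le1: "\<And>z. z \<in> ball 0 t \<Longrightarrow> F z \<le> 1" and "0 \<le> s" and "s \<le> t"
  shows "integral (ball 0 t) F - integral (ball 0 s) F \<le> pi * (t\<^sup>2 - s\<^sup>2)"
proof -
  have sub: "ball (0::complex) s \<subseteq> ball 0 t"
    using \<open>s \<le> t\<close> by auto
  have vol: "((\<lambda>z. 1::real) has_integral pi * r\<^sup>2) (ball (0::complex) r)" if "0 \<le> r" for r
  proof -
    have "((\<lambda>z. 1::real) has_integral content (ball (0::complex) r)) (ball (0::complex) r)"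
      by (rule has_integral_measure_lborel[OF _ emeasure_bounded_finite[OF bounded_ball]]) simp
    then show ?thesis
      using that by (simp add: content_ball unit_ball_vol_2)
  qed
  have "((\<lambda>z. F z - (if z \<in> ball 0 s then F z else 0)) has_integral
      integral (ball 0 t) F - integral (ball 0 s) F) (ball 0 t)"
    by (intro has_integral_diff integrable_integral has_integral_restrict[OF sub, THEN iffD2])
      (use assms in auto)
  moreover have "((\<lambda>z. 1 - (if z \<in> ball 0 s then 1 else 0)) has_integral pi * t\<^sup>2 - pi * s\<^sup>2)
      (ball (0::complex) t)"
    by (intro has_integral_diff vol has_integral_restrict[OF sub, THEN iffD2]) (use assms in auto)
  ultimately have "integral (ball 0 t) F - integral (ball 0 s) F \<le> pi * t\<^sup>2 - pi * s\<^sup>2"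
    by (rule has_integral_le) (use le1 in auto)
  then show ?thesis
    by (simp add: algebra_simps)
qed

lemma integrable_on_ball_norm_power: "(\<lambda>z::complex. norm z ^ n) integrable_on ball 0 \<rho>"
  by (intro integrable_on_ball_if_continuous_on_cball continuous_intros)

lemma integral_ball_norm_power_rescale:
  assumes "t > 0"
  shows "integral (ball 0 t) (\<lambda>z::complex. norm z ^ n)
    = t ^ (n + 2) * integral (ball 0 1) (\<lambda>z::complex. norm z ^ n)"
proof -
  define I where "I \<rho> = integral (ball 0 \<rho>) (\<lambda>z::complex. norm z ^ n)" for \<rho>
  have "((\<lambda>w::complex. norm (t *\<^sub>R w) ^ n) has_integral I t / t\<^sup>2) (ball 0 1)"
    using has_integral_rescale_ball[OF integrable_integral[OF integrable_on_ball_norm_power] assms]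
    by (simp add: I_def)
  moreover have "(\<lambda>w::complex. norm (t *\<^sub>R w) ^ n) = (\<lambda>w. t ^ n * norm w ^ n)"
    using assms by (simp add: fun_eq_iff power_mult_distrib)
  moreover have "((\<lambda>w::complex. t ^ n * norm w ^ n) has_integral t ^ n * I 1) (ball 0 1)"
    unfolding I_def by (intro has_integral_mult_right integrable_integral integrable_on_ball_norm_power)
  ultimately have "I t / t\<^sup>2 = t ^ n * I 1"
    using has_integral_unique by metis
  then show ?thesis
    using assms by (simp add: I_def field_simps power_add power2_eq_square)
qed

text \<open>Rescaling and the annulus estimate give \<open>(1 - s^(n+2)) I \<le> pi (1 - s^2)\<close> for the
  integral \<open>I\<close> over the unit disc; let \<open>s \<rightarrow> 1\<close>.\<close>

lemma integral_unit_ball_norm_power_le: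
  "integral (ball 0 1) (\<lambda>z::complex. norm z ^ n) \<le> 2 * pi / (n + 2)"
proof -
  define I where "I = integral (ball 0 1) (\<lambda>z::complex. norm z ^ n)"
  have partial: "I * (\<Sum>j<n+2. s ^ j) \<le> pi * (1 + s)" if s: "0 < s" "s < 1" for s
  proof -
    have "I - s ^ (n + 2) * I \<le> pi * (1 - s\<^sup>2)"
      using integral_ball_diff_le[of "\<lambda>z. norm z ^ n" 1 s] s
        integral_ball_norm_power_rescale[OF s(1), of n]
      by (simp add: I_def integrable_on_ball_norm_power power_le_one)
    also have "I - s ^ (n + 2) * I = I * (1 - s ^ (n + 2))"
      by (simp add: algebra_simps)
    also have "\<dots> = (1 - s) * (I * (\<Sum>j<n+2. s ^ j))"
      unfolding one_diff_power_eq by (simp only: mult_ac)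
    also have "pi * (1 - s\<^sup>2) = (1 - s) * (pi * (1 + s))"
      by (simp add: algebra_simps power2_eq_square)
    finally show ?thesis
      using s by simp
  qed
  have "((\<lambda>s. I * (\<Sum>j<n+2. s ^ j)) \<longlongrightarrow> I * (\<Sum>j<n+2. 1 ^ j)) (at_left (1::real))"
    by (intro tendsto_intros)
  then have lim: "((\<lambda>s. I * (\<Sum>j<n+2. s ^ j)) \<longlongrightarrow> I * (n + 2)) (at_left (1::real))"
    by simp
  have "((\<lambda>s. pi * (1 + s)) \<longlongrightarrow> pi * (1 + 1)) (at_left (1::real))"
    by (intro tendsto_intros)
  moreover have "\<forall>\<^sub>F s in at_left 1. I * (\<Sum>j<n+2. s ^ j) \<le> pi * (1 + s)"
    using eventually_at_left_real[OF zero_less_one] by eventually_elim (use partial in auto)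
  ultimately have "I * (n + 2) \<le> pi * (1 + 1)"
    by (rule tendsto_le[OF trivial_limit_at_left_real _ lim])
  then show ?thesis
    by (simp add: I_def field_simps)
qed

lemma integral_ball_norm_power_le:
  assumes "\<rho> > 0"
  shows "integral (ball 0 \<rho>) (\<lambda>z::complex. norm z ^ n) \<le> 2 * pi * \<rho> ^ (n + 2) / (n + 2)"
proof -
  have "integral (ball 0 \<rho>) (\<lambda>z::complex. norm z ^ n)
      = \<rho> ^ (n + 2) * integral (ball 0 1) (\<lambda>z::complex. norm z ^ n)"
    by (rule integral_ball_norm_power_rescale[OF assms])
  also have "\<dots> \<le> \<rho> ^ (n + 2) * (2 * pi / (n + 2))"
    using assms by (intro mult_left_mono integral_unit_ball_norm_power_le) simp
  finally show ?thesis
    by (simp add: mult_ac)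
qed

lemma sum_root_unity_orthogonality:
  fixes M k l :: nat
  assumes "0 < M" and "k < M" and "l < M"
  defines "\<omega> \<equiv> exp (2 * complex_of_real pi * \<i> / of_nat M)"
  shows "(\<Sum>j<M. (\<omega> ^ k * cnj \<omega> ^ l) ^ j) = (if k = l then of_nat M else 0)"
proof -
  have \<omega>_power: "\<omega> ^ d = exp (2 * complex_of_real pi * \<i> * of_nat d / of_nat M)" for d
    unfolding \<omega>_def by (simp add: exp_of_nat_mult[symmetric] mult.commute)
  have "norm \<omega> = 1"
    unfolding \<omega>_def using norm_exp_i_times[of "2 * pi / M"] by (simp add: mult.commute)
  then have cnj_\<omega>: "cnj \<omega> = inverse \<omega>" and "\<omega> \<noteq> 0"
    using complex_norm_square[of \<omega>] by (auto intro: inverse_unique[symmetric])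
  have \<omega>_M: "\<omega> ^ M = 1"
    using \<omega>_power[of M] \<open>0 < M\<close> by simp
  have \<omega>_power_ne_1: "\<omega> ^ d \<noteq> 1" if "0 < d" "d < M" for d
  proof
    assume "\<omega> ^ d = 1"
    then have "M dvd d"
      using complex_root_unity_eq_1[of M d] \<open>0 < M\<close> \<omega>_power[of d] by simp
    with that show False
      by (simp add: nat_dvd_not_less)
  qed
  show ?thesis
  proof (cases "k = l")
    case True
    then show ?thesis
      using cnj_\<omega> \<open>\<omega> \<noteq> 0\<close> by (simp add: power_mult_distrib[symmetric])
  next
    case False
    define q where "q = \<omega> ^ k * cnj \<omega> ^ l"
    have "q ^ M = (\<omega> ^ M) ^ k * inverse ((\<omega> ^ M) ^ l)"
      unfolding q_def cnj_\<omega> power_mult_distrib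
      by (simp only: power_mult[symmetric] mult.commute power_inverse)
    then have "q ^ M = 1"
      using \<omega>_M by simp
    moreover have "q \<noteq> 1"
    proof (cases "l < k")
      case True
      then have "q = \<omega> ^ (k - l)"
        unfolding q_def cnj_\<omega> using \<open>\<omega> \<noteq> 0\<close> by (simp add: power_diff power_inverse divide_inverse)
      then show ?thesis
        using \<omega>_power_ne_1[of "k - l"] True \<open>k < M\<close> by simp
    next
      case False
      with \<open>k \<noteq> l\<close> have "k < l"
        by simp
      then have "q = inverse (\<omega> ^ (l - k))"
        unfolding q_def cnj_\<omega> using \<open>\<omega> \<noteq> 0\<close> by (simp add: power_diff power_inverse divide_inverse)
      then show ?thesis
        using \<omega>_power_ne_1[of "l - k"] \<open>k < l\<close> \<open>l < M\<close> by auto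
    qed
    ultimately have "(\<Sum>j<M. q ^ j) = 0"
      by (simp add: sum_gp_strict)
    then show ?thesis
      using False by (simp add: q_def)
  qed
qed

lemma sum_rotations_norm_poly_squared:
  fixes c :: "nat \<Rightarrow> complex" and z :: complex and N M :: nat
  assumes "N \<le> M" and "0 < M"
  defines "\<omega> \<equiv> exp (2 * complex_of_real pi * \<i> / of_nat M)"
  shows "(\<Sum>j<M. (norm (\<Sum>k<N. c k * (\<omega> ^ j * z) ^ k))\<^sup>2)
    = M * (\<Sum>k<N. (norm (c k))\<^sup>2 * norm z ^ (2 * k))"
proof -
  have expand: "(c k * (\<omega> ^ j * z) ^ k) * cnj (c l * (\<omega> ^ j * z) ^ l)
      = (c k * cnj (c l) * z ^ k * cnj z ^ l) * (\<omega> ^ k * cnj \<omega> ^ l) ^ j" for k l j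
  proof -
    have swap: "(w ^ j) ^ i = (w ^ i) ^ j" for w :: complex and i
      by (simp only: power_mult[symmetric] mult.commute)
    show ?thesis
      by (simp only: power_mult_distrib swap complex_cnj_mult complex_cnj_power mult_ac)
  qed
  have diagonal: "c k * cnj (c k) * z ^ k * cnj z ^ k * of_nat M
      = complex_of_real (M * ((norm (c k))\<^sup>2 * norm z ^ (2 * k)))" for k
  proof -
    have "z ^ k * cnj z ^ k = complex_of_real (norm z ^ (2 * k))"
      by (simp only: power_mult_distrib[symmetric] complex_norm_square[symmetric] of_real_power
          power_mult)
    moreover have "c k * cnj (c k) = complex_of_real ((norm (c k))\<^sup>2)"
      by (simp only: complex_norm_square)
    ultimately show ?thesis
      by (simp only: mult.assoc of_real_mult of_real_of_nat_eq) (simp only: mult_ac)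
  qed
  have "complex_of_real (\<Sum>j<M. (norm (\<Sum>k<N. c k * (\<omega> ^ j * z) ^ k))\<^sup>2)
      = (\<Sum>j<M. (\<Sum>k<N. c k * (\<omega> ^ j * z) ^ k) * cnj (\<Sum>l<N. c l * (\<omega> ^ j * z) ^ l))"
    by (simp only: of_real_sum complex_norm_square)
  also have "\<dots> = (\<Sum>j<M. \<Sum>k<N. \<Sum>l<N.
      (c k * cnj (c l) * z ^ k * cnj z ^ l) * (\<omega> ^ k * cnj \<omega> ^ l) ^ j)"
    by (simp only: cnj_sum sum_product expand)
  also have "\<dots> = (\<Sum>k<N. \<Sum>l<N.
      (c k * cnj (c l) * z ^ k * cnj z ^ l) * (\<Sum>j<M. (\<omega> ^ k * cnj \<omega> ^ l) ^ j))"
    by (simp add: sum_distrib_left sum.swap[of _ "{..<M}"])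
  also have "\<dots> = (\<Sum>k<N. \<Sum>l<N.
      (c k * cnj (c l) * z ^ k * cnj z ^ l) * (if k = l then of_nat M else 0))"
    by (intro sum.cong refl) (use assms in \<open>simp add: sum_root_unity_orthogonality\<close>)
  also have "\<dots> = (\<Sum>k<N. c k * cnj (c k) * z ^ k * cnj z ^ k * of_nat M)"
    by (simp add: if_distrib cong: if_cong)
  also have "\<dots> = complex_of_real (M * (\<Sum>k<N. (norm (c k))\<^sup>2 * norm z ^ (2 * k)))"
    by (simp only: diagonal of_real_sum sum_distrib_left)
  finally show ?thesis
    by (simp only: of_real_eq_iff)
qed

lemma integral_ball_norm_poly_squared_le:
  fixes c :: "nat \<Rightarrow> complex"
  assumes "r > 0"
  shows "integral (ball 0 r) (\<lambda>z. (norm (\<Sum>k<N. c k * z ^ k))\<^sup>2)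
    \<le> (\<Sum>k<N. (norm (c k))\<^sup>2 * (pi * r ^ (2 * k + 2) / (k + 1)))"
proof -
  define M where "M = N + 1"
  define \<omega> where "\<omega> = exp (2 * complex_of_real pi * \<i> / of_nat M)"
  define F where "F z = (norm (\<Sum>k<N. c k * z ^ k))\<^sup>2" for z
  define J where "J = integral (ball 0 r) F"
  define I where "I k = integral (ball 0 r) (\<lambda>z::complex. norm z ^ (2 * k))" for k
  have F: "(F has_integral J) (ball 0 r)"
    unfolding J_def F_def
    by (intro integrable_integral integrable_on_ball_if_continuous_on_cball continuous_intros)
  have "norm \<omega> = 1"
    unfolding \<omega>_def using norm_exp_i_times[of "2 * pi / M"] by (simp add: mult.commute)
  then have "((\<lambda>z. F (\<omega> ^ j * z)) has_integral J) (ball 0 r)" for j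
    by (intro has_integral_rotate_ball[OF F]) (simp_all add: F_def norm_power)
  then have "((\<lambda>z. \<Sum>j<M. F (\<omega> ^ j * z)) has_integral (\<Sum>j<M. J)) (ball 0 r)"
    by (intro has_integral_sum) simp_all
  moreover have "(\<lambda>z. \<Sum>j<M. F (\<omega> ^ j * z))
      = (\<lambda>z. M * (\<Sum>k<N. (norm (c k))\<^sup>2 * norm z ^ (2 * k)))"
    unfolding F_def \<omega>_def by (rule ext, rule sum_rotations_norm_poly_squared) (simp_all add: M_def)
  ultimately have rotations:
    "((\<lambda>z::complex. M * (\<Sum>k<N. (norm (c k))\<^sup>2 * norm z ^ (2 * k))) has_integral M * J) (ball 0 r)"
    by simp
  have "((\<lambda>z::complex. M * (\<Sum>k<N. (norm (c k))\<^sup>2 * norm z ^ (2 * k)))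
      has_integral M * (\<Sum>k<N. (norm (c k))\<^sup>2 * I k)) (ball 0 r)"
    unfolding I_def
    by (intro has_integral_mult_right has_integral_sum finite_lessThan integrable_integral
        integrable_on_ball_norm_power)
  from has_integral_unique[OF rotations this] have "J = (\<Sum>k<N. (norm (c k))\<^sup>2 * I k)"
    by (simp add: M_def)
  also have "\<dots> \<le> (\<Sum>k<N. (norm (c k))\<^sup>2 * (pi * r ^ (2 * k + 2) / (k + 1)))"
  proof (rule sum_mono, rule mult_left_mono)
    fix k
    have "I k \<le> 2 * pi * r ^ (2 * k + 2) / real (2 * k + 2)"
      unfolding I_def by (rule integral_ball_norm_power_le[OF assms])
    then show "I k \<le> pi * r ^ (2 * k + 2) / (k + 1)"
      by (simp add: field_simps)
  qed simp
  finally show ?thesis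
    unfolding J_def F_def .
qed
lemma taylor_coeff_eq_if_sums:
  assumes "\<And>z. norm z < 1 \<Longrightarrow> (\<lambda>n. a n * z ^ n) sums f z"
  shows "taylor_coeff f n = a n"
proof -
  have "f has_fps_expansion Abs_fps a"
  proof (rule has_fps_expansionI)
    show "\<forall>\<^sub>F z in nhds 0. (\<lambda>n. fps_nth (Abs_fps a) n * z ^ n) sums f z"
      unfolding eventually_nhds by (intro exI[of _ "ball 0 1"]) (auto intro: assms)
  qed
  from fps_nth_fps_expansion[OF this, of n] show ?thesis
    by (simp add: taylor_coeff_def)
qed

lemma norm_coeff_le_bohr_lambda:
  fixes a :: "nat \<Rightarrow> complex"
  assumes "ball 0 1 \<subseteq> \<Omega>"
    and bdd: "bdd_above {norm (taylor_coeff g n) / (1 - (norm (taylor_coeff g 0))\<^sup>2) | g n.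
       n \<ge> 1 \<and> g \<in> bounded_class \<Omega> \<and> \<not> (\<exists>c. \<forall>z\<in>\<Omega>. g z = c)}"
    and "bohr_lambda \<Omega> \<ge> 0" and f: "f \<in> bounded_class \<Omega>"
    and sums: "\<And>z. norm z < 1 \<Longrightarrow> (\<lambda>n. a n * z ^ n) sums f z"
    and "norm (a 0) < 1" and "n \<ge> 1"
  shows "norm (a n) \<le> bohr_lambda \<Omega> * (1 - (norm (a 0))\<^sup>2)"
proof -
  have pos: "0 < 1 - (norm (a 0))\<^sup>2"
    using \<open>norm (a 0) < 1\<close> by (simp add: abs_square_less_1)
  have tc: "taylor_coeff f k = a k" for k
    using sums by (rule taylor_coeff_eq_if_sums)
  show ?thesis
  proof (cases "\<exists>c. \<forall>z\<in>\<Omega>. f z = c")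
    case True
    then obtain c where c: "\<And>z. z \<in> \<Omega> \<Longrightarrow> f z = c"
      by blast
    have "(\<lambda>k. (if k = 0 then c else 0) * z ^ k) sums f z" if "norm z < 1" for z
    proof -
      have "(\<lambda>k. (if k = 0 then c else 0) * z ^ k) = (\<lambda>k. if k = 0 then c else 0)"
        by (simp add: fun_eq_iff)
      moreover have "f z = c"
        using that c \<open>ball 0 1 \<subseteq> \<Omega>\<close> by auto
      ultimately show ?thesis
        using sums_single[of 0 "\<lambda>_. c"] by simp
    qed
    then have "taylor_coeff f n = 0"
      using taylor_coeff_eq_if_sums[of "\<lambda>k. if k = 0 then c else 0" f n] \<open>n \<ge> 1\<close> by simp
    then show ?thesis
      using tc pos \<open>bohr_lambda \<Omega> \<ge> 0\<close> by simp
  next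
    case False
    have "norm (taylor_coeff f n) / (1 - (norm (taylor_coeff f 0))\<^sup>2) \<le> bohr_lambda \<Omega>"
      unfolding bohr_lambda_def by (rule cSup_upper[OF _ bdd]) (use False \<open>n \<ge> 1\<close> f in blast)
    then show ?thesis
      using pos by (simp add: tc divide_le_eq mult.commute)
  qed
qed

lemma
  fixes a :: "nat \<Rightarrow> complex"
  assumes coeff: "\<And>n. n \<ge> 1 \<Longrightarrow> norm (a n) \<le> L" and "0 \<le> r" and "r < 1"
  shows summable_norm_coeff_power: "summable (\<lambda>n. norm (a n) * r ^ n)"
    and suminf_norm_coeff_power_le: "(\<Sum>n. norm (a n) * r ^ n) \<le> norm (a 0) + L * (r / (1 - r))"
proof -
  have geom: "(\<lambda>n. L * r ^ Suc n) sums (L * (r / (1 - r)))"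
    using sums_mult[OF geometric_sums[of r], of "L * r"] assms by (simp add: mult_ac)
  have tail_le: "norm (a (Suc n)) * r ^ Suc n \<le> L * r ^ Suc n" for n
    using coeff[of "Suc n"] \<open>0 \<le> r\<close> by (simp add: mult_right_mono)
  have tail: "summable (\<lambda>n. norm (a (Suc n)) * r ^ Suc n)"
    by (rule summable_comparison_test'[OF sums_summable[OF geom], where N=0])
      (use tail_le \<open>0 \<le> r\<close> in simp)
  then show sm: "summable (\<lambda>n. norm (a n) * r ^ n)"
    by (simp only: summable_Suc_iff[of "\<lambda>n. norm (a n) * r ^ n"])
  have "(\<Sum>n. norm (a (Suc n)) * r ^ Suc n) \<le> L * (r / (1 - r))"
    using suminf_le[OF tail_le tail sums_summable[OF geom]] sums_unique[OF geom] by simp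
  then show "(\<Sum>n. norm (a n) * r ^ n) \<le> norm (a 0) + L * (r / (1 - r))"
    using suminf_split_head[OF sm] by simp
qed

lemma deriv_sums_diffs:
  fixes a :: "nat \<Rightarrow> complex"
  assumes sums: "\<And>z. norm z < 1 \<Longrightarrow> (\<lambda>n. a n * z ^ n) sums f z" and "norm z < 1"
  shows "(\<lambda>n. diffs a n * z ^ n) sums deriv f z"
proof -
  have summable: "summable (\<lambda>n. a n * w ^ n)" if "norm w < 1" for w
    using sums[OF that] by (rule sums_summable)
  have "((\<lambda>w. \<Sum>n. a n * w ^ n) has_field_derivative (\<Sum>n. diffs a n * z ^ n)) (at z)"
    by (rule termdiffs_strong'[OF summable \<open>norm z < 1\<close>])
  then have "(f has_field_derivative (\<Sum>n. diffs a n * z ^ n)) (at z)"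
    by (rule has_field_derivative_transform_within_open[where S="ball 0 1"])
      (use \<open>norm z < 1\<close> sums_unique[OF sums] in auto)
  then have "deriv f z = (\<Sum>n. diffs a n * z ^ n)"
    by (rule DERIV_imp_deriv)
  then show ?thesis
    using termdiff_converges[OF \<open>norm z < 1\<close> summable] by (simp add: summable_sums)
qed

lemma integral_ball_norm_poly_squared_le_geometric:
  fixes c :: "nat \<Rightarrow> complex" and L :: real
  assumes coeff: "\<And>k. norm (c k) \<le> (k + 1) * L" and "0 < r" and "r < 1"
  shows "integral (ball 0 r) (\<lambda>z. (norm (\<Sum>k<N. c k * z ^ k))\<^sup>2) \<le> pi * L\<^sup>2 * r\<^sup>2 / (1 - r\<^sup>2)\<^sup>2"
proof -
  have geom: "(\<lambda>k. of_nat (Suc k) * (r\<^sup>2) ^ k) sums (1 / (1 - r\<^sup>2)\<^sup>2)"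
    using geometric_deriv_sums[of "r\<^sup>2"] assms by (simp add: abs_square_less_1)
  have term_le: "(norm (c k))\<^sup>2 * (pi * r ^ (2 * k + 2) / (k + 1))
      \<le> pi * L\<^sup>2 * r\<^sup>2 * (of_nat (Suc k) * (r\<^sup>2) ^ k)" for k
  proof -
    have "(norm (c k))\<^sup>2 \<le> ((k + 1) * L)\<^sup>2"
      using coeff[of k] by (intro power_mono) (simp_all add: add.commute)
    then have "(norm (c k))\<^sup>2 * (pi * r ^ (2 * k + 2) / (k + 1))
        \<le> ((k + 1) * L)\<^sup>2 * (pi * r ^ (2 * k + 2) / (k + 1))"
      by (rule mult_right_mono) (use \<open>0 < r\<close> in simp)
    also have "\<dots> = pi * L\<^sup>2 * r\<^sup>2 * (of_nat (Suc k) * (r\<^sup>2) ^ k)"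
      by (simp add: field_simps power2_eq_square power_mult power_add)
    finally show ?thesis .
  qed
  have "integral (ball 0 r) (\<lambda>z. (norm (\<Sum>k<N. c k * z ^ k))\<^sup>2)
      \<le> (\<Sum>k<N. (norm (c k))\<^sup>2 * (pi * r ^ (2 * k + 2) / (k + 1)))"
    by (rule integral_ball_norm_poly_squared_le[OF \<open>0 < r\<close>])
  also have "\<dots> \<le> pi * L\<^sup>2 * r\<^sup>2 * (\<Sum>k<N. of_nat (Suc k) * (r\<^sup>2) ^ k)"
    unfolding sum_distrib_left by (intro sum_mono term_le)
  also have "\<dots> \<le> pi * L\<^sup>2 * r\<^sup>2 * (1 / (1 - r\<^sup>2)\<^sup>2)"
    using sum_le_suminf[OF sums_summable[OF geom], of "{..<N}"] sums_unique[OF geom]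
    by (intro mult_left_mono) auto
  finally show ?thesis
    by simp
qed

lemma area_image_nonneg: "0 \<le> area_image f r"
  unfolding area_image_def
  by (cases "(\<lambda>z. (norm (deriv f z))\<^sup>2) integrable_on ball 0 r")
    (auto intro: integral_nonneg simp: not_integrable_integral)

lemma area_image_le:
  fixes a :: "nat \<Rightarrow> complex" and L :: real
  assumes sums: "\<And>z. norm z < 1 \<Longrightarrow> (\<lambda>n. a n * z ^ n) sums f z"
    and coeff: "\<And>n. n \<ge> 1 \<Longrightarrow> norm (a n) \<le> L" and "0 < r" and "r < 1"
  shows "area_image f r \<le> pi * L\<^sup>2 * r\<^sup>2 / (1 - r\<^sup>2)\<^sup>2"
proof -
  define p where "p N z = (\<Sum>k<N. diffs a k * z ^ k)" for N z
  have "0 \<le> L"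
    using coeff[of 1] norm_ge_zero order_trans by blast
  have diffs_le: "norm (diffs a k) \<le> (k + 1) * L" for k
  proof -
    have "norm (diffs a k) = real (Suc k) * norm (a (Suc k))"
      unfolding diffs_def norm_mult norm_of_nat ..
    then show ?thesis
      using mult_left_mono[OF coeff[of "Suc k"], of "real (Suc k)"] by (simp add: add.commute)
  qed
  have p_le: "norm (p N z) \<le> L / (1 - r)\<^sup>2" if "z \<in> ball 0 r" for N z
  proof -
    have geom: "(\<lambda>k. of_nat (Suc k) * r ^ k) sums (1 / (1 - r)\<^sup>2)"
      using geometric_deriv_sums[of r] assms by simp
    have "norm (p N z) \<le> (\<Sum>k<N. norm (diffs a k) * norm z ^ k)"
      unfolding p_def by (rule order_trans[OF norm_sum]) (simp add: norm_mult norm_power)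
    also have "\<dots> \<le> (\<Sum>k<N. L * (of_nat (Suc k) * r ^ k))"
    proof (rule sum_mono)
      fix k
      have "norm z ^ k \<le> r ^ k"
        using that by (intro power_mono) auto
      from mult_mono[OF diffs_le this] \<open>0 \<le> L\<close>
      show "norm (diffs a k) * norm z ^ k \<le> L * (of_nat (Suc k) * r ^ k)"
        by (simp add: mult_ac add.commute)
    qed
    also have "\<dots> \<le> L * (1 / (1 - r)\<^sup>2)"
      unfolding sum_distrib_left[symmetric]
      using sum_le_suminf[OF sums_summable[OF geom], of "{..<N}"] sums_unique[OF geom] \<open>0 \<le> L\<close> \<open>0 < r\<close>
      by (intro mult_left_mono) auto
    finally show ?thesis
      by simp
  qed
  have "(\<lambda>N. integral (ball 0 r) (\<lambda>z. (norm (p N z))\<^sup>2))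
      \<longlonglongrightarrow> integral (ball 0 r) (\<lambda>z. (norm (deriv f z))\<^sup>2)"
  proof (rule dominated_convergence(2)[where h="\<lambda>_. (L / (1 - r)\<^sup>2)\<^sup>2"])
    show "(\<lambda>z. (norm (p N z))\<^sup>2) integrable_on ball 0 r" for N
      unfolding p_def by (intro integrable_on_ball_if_continuous_on_cball continuous_intros)
    show "(\<lambda>_. (L / (1 - r)\<^sup>2)\<^sup>2) integrable_on ball 0 r"
      by (rule integrable_on_const[OF lmeasurable_ball])
    show "norm ((norm (p N z))\<^sup>2) \<le> (L / (1 - r)\<^sup>2)\<^sup>2" if "z \<in> ball 0 r" for N z
      using p_le[OF that, of N] by (simp add: power_mono)
    show "(\<lambda>N. (norm (p N z))\<^sup>2) \<longlonglongrightarrow> (norm (deriv f z))\<^sup>2" if "z \<in> ball 0 r" for z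
    proof -
      have "norm z < 1"
        using that \<open>r < 1\<close> by simp
      from deriv_sums_diffs[OF sums this] have "(\<lambda>N. p N z) \<longlonglongrightarrow> deriv f z"
        by (simp add: sums_def p_def)
      then show ?thesis
        by (intro tendsto_intros)
    qed
  qed
  moreover have "integral (ball 0 r) (\<lambda>z. (norm (p N z))\<^sup>2) \<le> pi * L\<^sup>2 * r\<^sup>2 / (1 - r\<^sup>2)\<^sup>2" for N
    unfolding p_def using diffs_le assms(3,4) by (rule integral_ball_norm_poly_squared_le_geometric)
  ultimately show ?thesis
    unfolding area_image_def using LIMSEQ_le_const2 by blast
qed

lemma sum_power_le_geometric:
  fixes u :: real
  assumes "0 \<le> u" and "u < 1"
  shows "(\<Sum>j=1..m. u ^ j) \<le> u / (1 - u)"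
proof -
  have geom: "(\<lambda>i. u ^ Suc i) sums (u * (1 / (1 - u)))"
    using sums_mult[OF geometric_sums[of u], of u] assms by simp
  have "(\<Sum>j=1..m. u ^ j) = (\<Sum>i<m. u ^ Suc i)"
    by (simp add: sum.atLeast1_atMost_eq)
  also have "\<dots> \<le> u * (1 / (1 - u))"
    using sum_le_suminf[OF sums_summable[OF geom], of "{..<m}"] sums_unique[OF geom] assms by simp
  finally show ?thesis
    by simp
qed

lemma bohr_weight_area_factor:
  fixes lam :: real
  assumes "lam > 0"
  shows "((1 + lam) / (1 + 2 * lam))\<^sup>2 * ((1 / (1 + 2 * lam))\<^sup>2 / (1 - (1 / (1 + 2 * lam))\<^sup>2)\<^sup>2)
    = 1 / (16 * lam\<^sup>2)"
proof -
  define d where "d = 1 + 2 * lam"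
  have "d > 0"
    using assms by (simp add: d_def)
  have "1 - (1 / d)\<^sup>2 = (d\<^sup>2 - 1) / d\<^sup>2"
    using \<open>d > 0\<close> by (simp add: field_simps)
  also have "d\<^sup>2 - 1 = 4 * lam * (1 + lam)"
    by (simp add: d_def power2_eq_square algebra_simps)
  finally have eq: "1 - (1 / d)\<^sup>2 = 4 * lam * (1 + lam) / d\<^sup>2" .
  have "(4 * lam * (1 + lam) / d\<^sup>2)\<^sup>2 = 16 * lam\<^sup>2 * (1 + lam)\<^sup>2 / (d\<^sup>2)\<^sup>2"
    by (simp add: power_divide power_mult_distrib)
  then have "((1 + lam) / d)\<^sup>2 * ((1 / d)\<^sup>2 / (1 - (1 / d)\<^sup>2)\<^sup>2) = 1 / (16 * lam\<^sup>2)"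
    unfolding eq using \<open>d > 0\<close> assms by (simp add: power_divide power2_eq_square)
  then show ?thesis
    by (simp only: d_def)
qed

lemma bohr_bound_less_one:
  fixes A :: real
  assumes "0 \<le> A" and "A < 1"
  defines "u \<equiv> (1 - A\<^sup>2)\<^sup>2 / 16"
  shows "A + (1 - A\<^sup>2) / 2 + u / (1 - u) < 1"
proof -
  have "0 \<le> 1 - A\<^sup>2" and "1 - A\<^sup>2 \<le> 1"
    using assms by (auto simp: abs_square_le_1)
  then have "0 \<le> u" and "u \<le> 1 / 16"
    by (auto simp: u_def power_le_one)
  have "(1 - A\<^sup>2)\<^sup>2 = (1 - A)\<^sup>2 * (1 + A)\<^sup>2"
    by (simp add: power2_eq_square algebra_simps)
  also have "\<dots> \<le> (1 - A)\<^sup>2 * 4"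
    using assms power_mono[of "1 + A" 2 2] by (intro mult_left_mono) auto
  finally have u_le: "u \<le> (1 - A)\<^sup>2 / 4"
    by (simp add: u_def)
  have "u / (1 - u) \<le> u / (15 / 16)"
    using \<open>0 \<le> u\<close> \<open>u \<le> 1 / 16\<close> by (intro divide_left_mono) auto
  also have "\<dots> \<le> ((1 - A)\<^sup>2 / 4) / (15 / 16)"
    using u_le by (intro divide_right_mono) auto
  also have "\<dots> < (1 - A)\<^sup>2 / 2"
    using assms by (simp add: field_simps)
  also have "(1 - A)\<^sup>2 / 2 = 1 - A - (1 - A\<^sup>2) / 2"
    by (simp add: power2_eq_square field_simps)
  finally show ?thesis
    by simp
qed

lemma bohr_area_sum_less_one:
  fixes a :: "nat \<Rightarrow> complex" and lam r :: real
  assumes "lam > 0" and "norm (a 0) < 1"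
    and coeff: "\<And>n. n \<ge> 1 \<Longrightarrow> norm (a n) \<le> lam * (1 - (norm (a 0))\<^sup>2)"
    and sums: "\<And>z. norm z < 1 \<Longrightarrow> (\<lambda>n. a n * z ^ n) sums f z"
    and "0 < r" and "r \<le> 1 / (1 + 2 * lam)"
  shows "(\<Sum>n. norm (a n) * r ^ n)
    + (\<Sum>j=1..m. ((1 + lam) / (1 + 2 * lam)) ^ (2 * j) * (area_image f r / pi) ^ j) < 1"
proof -
  define A where "A = norm (a 0)"
  define L where "L = lam * (1 - A\<^sup>2)"
  define r0 where "r0 = 1 / (1 + 2 * lam)"
  define k where "k = ((1 + lam) / (1 + 2 * lam))\<^sup>2"
  define u where "u = (1 - A\<^sup>2)\<^sup>2 / 16"
  define t where "t = area_image f r / pi"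
  have "0 \<le> A" "A < 1"
    using \<open>norm (a 0) < 1\<close> by (simp_all add: A_def)
  then have "0 < 1 - A\<^sup>2"
    by (simp add: abs_square_less_1)
  then have "0 \<le> L"
    using \<open>lam > 0\<close> by (simp add: L_def)
  have coeff_L: "norm (a n) \<le> L" if "n \<ge> 1" for n
    using coeff[OF that] by (simp add: L_def A_def)
  have "r0 < 1" "r \<le> r0"
    using \<open>lam > 0\<close> \<open>r \<le> 1 / (1 + 2 * lam)\<close> by (simp_all add: r0_def)
  then have "r < 1"
    by linarith
  have series: "(\<Sum>n. norm (a n) * r ^ n) \<le> A + (1 - A\<^sup>2) / 2"
  proof -
    have "r / (1 - r) \<le> r0 / (1 - r0)"
      using \<open>0 < r\<close> \<open>r \<le> r0\<close> \<open>r0 < 1\<close> by (intro frac_le) auto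
    also have "r0 / (1 - r0) = 1 / (2 * lam)"
      using \<open>lam > 0\<close> by (simp add: r0_def field_simps)
    finally have "L * (r / (1 - r)) \<le> L * (1 / (2 * lam))"
      using \<open>0 \<le> L\<close> by (rule mult_left_mono)
    also have "\<dots> = (1 - A\<^sup>2) / 2"
      using \<open>lam > 0\<close> by (simp add: L_def)
    finally have "L * (r / (1 - r)) \<le> (1 - A\<^sup>2) / 2" .
    moreover have "(\<Sum>n. norm (a n) * r ^ n) \<le> A + L * (r / (1 - r))"
      unfolding A_def by (intro suminf_norm_coeff_power_le) (use coeff_L \<open>0 < r\<close> \<open>r < 1\<close> in auto)
    ultimately show ?thesis
      by linarith
  qed
  have area: "k * t \<le> u"
  proof -
    have "t \<le> L\<^sup>2 * (r\<^sup>2 / (1 - r\<^sup>2)\<^sup>2)"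
      using area_image_le[OF sums coeff_L \<open>0 < r\<close> \<open>r < 1\<close>] by (simp add: t_def field_simps)
    also have "\<dots> \<le> L\<^sup>2 * (r0\<^sup>2 / (1 - r0\<^sup>2)\<^sup>2)"
    proof (intro mult_left_mono frac_le)
      show "r\<^sup>2 \<le> r0\<^sup>2"
        using \<open>0 < r\<close> \<open>r \<le> r0\<close> by (intro power_mono) auto
      then show "(1 - r0\<^sup>2)\<^sup>2 \<le> (1 - r\<^sup>2)\<^sup>2"
        using \<open>0 < r\<close> \<open>r \<le> r0\<close> \<open>r0 < 1\<close> by (intro power_mono) (auto simp: abs_square_le_1)
      have "r0\<^sup>2 < 1"
        using \<open>0 < r\<close> \<open>r \<le> r0\<close> \<open>r0 < 1\<close> by (simp add: abs_square_less_1)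
      then show "0 < (1 - r0\<^sup>2)\<^sup>2"
        by simp
    qed auto
    finally have "k * t \<le> k * (L\<^sup>2 * (r0\<^sup>2 / (1 - r0\<^sup>2)\<^sup>2))"
      by (rule mult_left_mono) (simp add: k_def)
    also have "\<dots> = L\<^sup>2 * (k * (r0\<^sup>2 / (1 - r0\<^sup>2)\<^sup>2))"
      by (simp only: mult_ac)
    also have "\<dots> = L\<^sup>2 * (1 / (16 * lam\<^sup>2))"
      unfolding k_def r0_def bohr_weight_area_factor[OF \<open>lam > 0\<close>] ..
    also have "\<dots> = u"
      using \<open>lam > 0\<close> by (simp add: L_def u_def power_mult_distrib)
    finally show ?thesis .
  qed
  have "(\<Sum>j=1..m. ((1 + lam) / (1 + 2 * lam)) ^ (2 * j) * t ^ j) \<le> (\<Sum>j=1..m. u ^ j)"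
  proof (rule sum_mono)
    fix j
    have "((1 + lam) / (1 + 2 * lam)) ^ (2 * j) * t ^ j = (k * t) ^ j"
      by (simp add: k_def power_mult power_mult_distrib)
    also have "\<dots> \<le> u ^ j"
      using area area_image_nonneg[of f r] by (intro power_mono) (simp_all add: k_def t_def)
    finally show "((1 + lam) / (1 + 2 * lam)) ^ (2 * j) * t ^ j \<le> u ^ j" .
  qed
  also have "\<dots> \<le> u / (1 - u)"
  proof (rule sum_power_le_geometric)
    have "(1 - A\<^sup>2)\<^sup>2 \<le> 1"
      using \<open>0 < 1 - A\<^sup>2\<close> \<open>0 \<le> A\<close> by (intro power_le_one) auto
    then show "0 \<le> u" "u < 1"
      by (simp_all add: u_def)
  qed
  finally show ?thesis
    using series bohr_bound_less_one[OF \<open>0 \<le> A\<close> \<open>A < 1\<close>] by (simp add: t_def u_def)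
qed

theorem theorem2p3:
  fixes \<Omega> :: "complex set" and f :: "complex \<Rightarrow> complex" and a :: "nat \<Rightarrow> complex"
    and m :: nat
  assumes "open \<Omega>" and "connected \<Omega>" and "simply_connected \<Omega>"
    and "ball 0 1 \<subseteq> \<Omega>"
    and "bdd_above {norm (taylor_coeff g n) / (1 - (norm (taylor_coeff g 0))\<^sup>2) | g n.
       n \<ge> 1 \<and> g \<in> bounded_class \<Omega> \<and> \<not> (\<exists>c. \<forall>z\<in>\<Omega>. g z = c)}"
    and "bohr_lambda \<Omega> > 0"
    and "m \<ge> 1"
    and "f \<in> bounded_class \<Omega>"
    and "\<forall>z\<in>ball 0 1. (\<lambda>n. a n * z ^ n) sums f z"
  shows "(\<forall>r. 0 < r \<and> r \<le> 1 / (1 + 2 * bohr_lambda \<Omega>) \<longrightarrow>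
            summable (\<lambda>n. norm (a n) * r ^ n) \<and>
            (\<Sum>n. norm (a n) * r ^ n)
              + (\<Sum>j=1..m. ((1 + bohr_lambda \<Omega>) / (1 + 2 * bohr_lambda \<Omega>)) ^ (2 * j)
                    * (area_image f r / pi) ^ j) \<le> 1)
       \<and> ((\<Sum>n. norm (a n) * (1 / (1 + 2 * bohr_lambda \<Omega>)) ^ n)
              + (\<Sum>j=1..m. ((1 + bohr_lambda \<Omega>) / (1 + 2 * bohr_lambda \<Omega>)) ^ (2 * j)
                    * (area_image f (1 / (1 + 2 * bohr_lambda \<Omega>)) / pi) ^ j) = 1
          \<longrightarrow> (\<exists>c. norm c = 1 \<and> (\<forall>z\<in>\<Omega>. f z = c)))"
proof -
  define lam where "lam = bohr_lambda \<Omega>"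
  have "0 < lam"
    using assms(6) by (simp add: lam_def)
  have sums: "\<And>z. norm z < 1 \<Longrightarrow> (\<lambda>n. a n * z ^ n) sums f z"
    using assms(9) by simp
  have "a 0 = f 0"
    using sums[of 0] by (simp add: powser_sums_zero_iff)
  moreover have "0 \<in> \<Omega>"
    using assms(4) by auto
  ultimately have a0: "norm (a 0) < 1"
    using assms(8) by (simp add: bounded_class_def)
  have coeff: "norm (a n) \<le> lam * (1 - (norm (a 0))\<^sup>2)" if "n \<ge> 1" for n
    unfolding lam_def
    by (rule norm_coeff_le_bohr_lambda[OF assms(4,5) _ assms(8) sums a0 that])
      (use assms(6) in simp)
  have less_one: "(\<Sum>n. norm (a n) * r ^ n)
      + (\<Sum>j=1..m. ((1 + lam) / (1 + 2 * lam)) ^ (2 * j) * (area_image f r / pi) ^ j) < 1"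
    if "0 < r" and "r \<le> 1 / (1 + 2 * lam)" for r
    using \<open>0 < lam\<close> a0 coeff sums that by (rule bohr_area_sum_less_one)
  have "1 / (1 + 2 * lam) < 1"
    using \<open>0 < lam\<close> by simp
  then have summable: "summable (\<lambda>n. norm (a n) * r ^ n)" if "0 < r" "r \<le> 1 / (1 + 2 * lam)" for r
    using that coeff
    by (intro summable_norm_coeff_power[where L="lam * (1 - (norm (a 0))\<^sup>2)"]) auto
  have "0 < 1 / (1 + 2 * lam)"
    using \<open>0 < lam\<close> by simp
  from less_one[OF this order_refl] show ?thesis
    unfolding lam_def[symmetric]
    using summable less_one by (auto intro: less_imp_le)
qed

end
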